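(* Let $K$ be a field, let $e_1,\dots,e_m$ be a basis of $K^m$, and let $T_1,\dots,T_k:K^m\to K^n$ be linear maps. Suppose that for every $l$ and every choice of distinct indices $i_1,\dots,i_l\in\{1,\dots,m\}$, the span of the vectors $\{T_j(e_{i_t}): 1\le t\le l,\ 1\le j\le k\}$ has dimension at least $2l$. Then there exist functions $\phi,\psi:\{1,\dots,m\}\to\{1,\dots,k\}$ such that the $2m$ vectors $T_{\phi(1)}(e_1),\dots,T_{\phi(m)}(e_m),T_{\psi(1)}(e_1),\dots,T_{\psi(m)}(e_m)$ are linearly independent. *)

theory Defs
  imports "HOL-Analysis.Analysis"
begin

end

theory Submission
  imports Defs
begin

(* Rado's theorem, the linear-algebra version of Hall's marriage theorem, provides the
   vectors: a finite family of finite sets of vectors A x, x \<in> N, has an independent system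
   of distinct representatives as soon as dim A(J) \<ge> |J| for every J \<subseteq> N, where A(J) is
   the union of the A x with x \<in> J. Indexing the family by two copies of the basis, both
   copies of e_i carrying the set {T_j(e_i) | j}, turns the hypothesis into exactly this
   condition.

   Rado's theorem follows by deleting elements one at a time while keeping the condition,
   until all sets are singletons. If neither of two elements y1 \<noteq> y2 of A x can be deleted,
   there are K1, K2 \<subseteq> N - {x} with dim S1 \<le> |K1| and dim S2 \<le> |K2|, where
   S1 = A(K1) \<union> (A x - {y1}) and S2 = A(K2) \<union> (A x - {y2}). Since S1 \<union> S2 contains
   A(K1 \<union> K2 \<union> {x}) and S1 \<inter> S2 contains A(K1 \<inter> K2), submodularity of dim contradicts
   the condition for K1 \<union> K2 \<union> {x} and K1 \<inter> K2. *)

context finite_dimensional_vector_space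
begin

lemma dim_Un_Int_le: "dim (S \<union> T) + dim (S \<inter> T) \<le> dim S + dim T"
proof -
  have "dim (S \<union> T) = dim {x + y |x y. x \<in> span S \<and> y \<in> span T}"
    by (metis dim_span span_Un)
  moreover have "dim (S \<inter> T) \<le> dim (span S \<inter> span T)"
    by (rule dim_subset) (auto intro: span_base)
  moreover have "dim {x + y |x y. x \<in> span S \<and> y \<in> span T} + dim (span S \<inter> span T)
      = dim S + dim T"
    by (simp add: dim_sums_Int subspace_span)
  ultimately show ?thesis
    by linarith
qed

definition rado_condition :: "'i set \<Rightarrow> ('i \<Rightarrow> 'b set) \<Rightarrow> bool"
  where "rado_condition N A \<longleftrightarrow> (\<forall>J\<subseteq>N. card J \<le> dim (\<Union>(A ` J)))"

(* Because of the optional prefix of the interpretation eucl?, the plain name rado_condition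
   denotes its Euclidean-space instance, hence local.rado_condition below. *)

lemma rado_condition_nonempty:
  assumes "local.rado_condition N A" "x \<in> N"
  shows "A x \<noteq> {}"
proof
  assume "A x = {}"
  moreover have "card {x} \<le> dim (\<Union>(A ` {x}))"
    using assms unfolding local.rado_condition_def by blast
  ultimately show False
    by simp
qed

lemma rado_condition_singletons_imp_independent:
  assumes "local.rado_condition N A" "finite N" "\<And>x. x \<in> N \<Longrightarrow> A x = {f x}"
  shows "inj_on f N \<and> independent (f ` N)"
proof -
  have "\<Union>(A ` N) = f ` N"
    using assms(3) by auto
  then have "card N \<le> dim (f ` N)"
    using assms(1) unfolding local.rado_condition_def by (metis order_refl)
  moreover have "dim (f ` N) \<le> card (f ` N)"
    using assms(2) by (intro dim_le_card) (auto intro: span_base)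
  moreover have "card (f ` N) \<le> card N"
    using assms(2) by (rule card_image_le)
  ultimately have "card (f ` N) = card N" "card (f ` N) \<le> dim (f ` N)"
    by linarith+
  then show ?thesis
    using assms(2) card_le_dim_spanning[OF order_refl span_superset]
    by (simp add: eq_card_imp_inj_on)
qed

lemma rado_condition_delete_tight_set:
  assumes rado: "local.rado_condition N A" and "finite N" "x \<in> N"
    and not_rado: "\<not> local.rado_condition N (A(x := A x - {y}))"
  obtains K where "K \<subseteq> N - {x}" "dim (\<Union>(A ` K) \<union> (A x - {y})) \<le> card K"
proof -
  from not_rado obtain J where J: "J \<subseteq> N" "dim (\<Union>((A(x := A x - {y})) ` J)) < card J"
    unfolding local.rado_condition_def by (auto simp: not_le)
  have "x \<in> J"
  proof (rule ccontr)
    assume "x \<notin> J"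
    then have "\<Union>((A(x := A x - {y})) ` J) = \<Union>(A ` J)"
      by auto
    with J rado show False
      unfolding local.rado_condition_def by auto
  qed
  then have "\<Union>((A(x := A x - {y})) ` J) = \<Union>(A ` (J - {x})) \<union> (A x - {y})"
    by auto
  moreover have "card J = Suc (card (J - {x}))"
    using \<open>x \<in> J\<close> J(1) \<open>finite N\<close> by (metis card_Suc_Diff1 finite_subset)
  moreover have "J - {x} \<subseteq> N - {x}"
    using J(1) by blast
  ultimately show ?thesis
    using that[of "J - {x}"] J(2) by simp
qed

lemma rado_condition_delete:
  assumes rado: "local.rado_condition N A" and fin: "finite N" and x: "x \<in> N"
    and y: "y1 \<in> A x" "y2 \<in> A x" "y1 \<noteq> y2"
  obtains y where "y \<in> A x" "local.rado_condition N (A(x := A x - {y}))"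
proof (rule ccontr)
  assume "\<not> thesis"
  with that y have "\<not> local.rado_condition N (A(x := A x - {y1}))"
    "\<not> local.rado_condition N (A(x := A x - {y2}))"
    by blast+
  then obtain K1 K2 where K: "K1 \<subseteq> N - {x}" "K2 \<subseteq> N - {x}"
    and dim_S1: "dim (\<Union>(A ` K1) \<union> (A x - {y1})) \<le> card K1"
    and dim_S2: "dim (\<Union>(A ` K2) \<union> (A x - {y2})) \<le> card K2"
    using rado_condition_delete_tight_set[OF rado fin x] by metis
  define S1 where "S1 = \<Union>(A ` K1) \<union> (A x - {y1})"
  define S2 where "S2 = \<Union>(A ` K2) \<union> (A x - {y2})"
  have fin_K: "finite K1" "finite K2"
    using K fin finite_subset by blast+
  have "x \<notin> K1 \<union> K2"
    using K by blast
  then have "card (K1 \<union> K2) + 1 = card (insert x (K1 \<union> K2))"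
    using fin_K by simp
  also have "\<dots> \<le> dim (\<Union>(A ` (insert x (K1 \<union> K2))))"
    using rado K x unfolding local.rado_condition_def
    by (meson Diff_subset insert_subset le_sup_iff order_trans)
  also have "\<dots> \<le> dim (S1 \<union> S2)"
    using y by (intro dim_subset) (auto simp: S1_def S2_def)
  finally have union: "card (K1 \<union> K2) + 1 \<le> dim (S1 \<union> S2)" .
  have "card (K1 \<inter> K2) \<le> dim (\<Union>(A ` (K1 \<inter> K2)))"
    using rado K unfolding local.rado_condition_def
    by (meson Diff_subset inf.coboundedI1 order_trans)
  also have "\<dots> \<le> dim (S1 \<inter> S2)"
    by (intro dim_subset) (auto simp: S1_def S2_def)
  finally have inter: "card (K1 \<inter> K2) \<le> dim (S1 \<inter> S2)" .
  show False
    using dim_Un_Int_le[of S1 S2] card_Un_Int[OF fin_K] union inter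
      dim_S1[folded S1_def] dim_S2[folded S2_def]
    by linarith
qed

theorem rado_independent_transversal:
  assumes "finite N" "\<And>x. x \<in> N \<Longrightarrow> finite (A x)" "local.rado_condition N A"
  shows "\<exists>f. (\<forall>x\<in>N. f x \<in> A x) \<and> inj_on f N \<and> independent (f ` N)"
  using assms(2,3)
proof (induction "\<Sum>x\<in>N. card (A x)" arbitrary: A rule: less_induct)
  case less
  show ?case
  proof (cases "\<exists>x\<in>N. \<exists>y1\<in>A x. \<exists>y2\<in>A x. y1 \<noteq> y2")
    case True
    then obtain x y1 y2 where x: "x \<in> N" and y12: "y1 \<in> A x" "y2 \<in> A x" "y1 \<noteq> y2"
      by blast
    from y12 obtain y where y: "y \<in> A x" and rado_B: "local.rado_condition N (A(x := A x - {y}))"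
      by (rule rado_condition_delete[OF less.prems(2) assms(1) x])
    define B where "B = A(x := A x - {y})"
    have "card (B x) < card (A x)"
      unfolding B_def fun_upd_same by (rule card_Diff1_less[OF less.prems(1)[OF x] y])
    then have "(\<Sum>z\<in>N. card (B z)) < (\<Sum>z\<in>N. card (A z))"
      using x assms(1) by (simp add: B_def sum.remove)
    moreover have "\<And>z. z \<in> N \<Longrightarrow> finite (B z)"
      using less.prems(1) x by (simp add: B_def)
    ultimately obtain f where f: "\<forall>z\<in>N. f z \<in> B z" "inj_on f N" "independent (f ` N)"
      using less.hyps rado_B unfolding B_def by blast
    then have "\<forall>z\<in>N. f z \<in> A z"
      by (auto simp: B_def split: if_splits)
    with f show ?thesis
      by blast
  next
    case False
    define f where "f x = (SOME y. y \<in> A x)" for x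
    have "A x = {f x}" if "x \<in> N" for x
    proof -
      have "f x \<in> A x"
        unfolding f_def using rado_condition_nonempty[OF less.prems(2) that]
        by (simp add: some_in_eq)
      with False that show ?thesis
        by blast
    qed
    with rado_condition_singletons_imp_independent[OF less.prems(2) assms(1)] show ?thesis
      by blast
  qed
qed

lemma rado_condition_Plus_self:
  assumes "finite N" "\<And>I. I \<subseteq> N \<Longrightarrow> 2 * card I \<le> dim (\<Union>(B ` I))"
  shows "local.rado_condition (N <+> N) (\<lambda>x. B (case_sum id id x))"
  unfolding local.rado_condition_def
proof (intro allI impI)
  fix J
  assume J: "J \<subseteq> N <+> N"
  define I where "I = case_sum id id ` J"
  have I: "I \<subseteq> N"
    using J unfolding I_def by force
  have "J \<subseteq> I <+> I"
  proof
    fix z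
    assume "z \<in> J"
    then show "z \<in> I <+> I"
      unfolding I_def by (cases z) force+
  qed
  then have "card J \<le> 2 * card I"
    using I assms(1) by (metis card_Plus card_mono finite_Plus finite_subset mult_2)
  also have "\<dots> \<le> dim (\<Union>(B ` I))"
    using I by (rule assms(2))
  finally show "card J \<le> dim (\<Union>x\<in>J. B (case_sum id id x))"
    by (simp add: I_def image_image)
qed

end

theorem lemma6:
  fixes e :: "'m::finite \<Rightarrow> 'a::field ^ 'm"
    and T :: "nat \<Rightarrow> 'a ^ 'm \<Rightarrow> 'a ^ 'n::finite"
    and k :: nat
  assumes e_inj: "inj e"
    and e_indep: "vec.independent (range e)"
    and e_span: "vec.span (range e) = UNIV"
    and T_lin: "\<And>j. j \<in> {1..k} \<Longrightarrow> Vector_Spaces.linear (*s) (*s) (T j)"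
    and hyp: "\<And>I :: 'm set. vec.dim {T j (e i) | i j. i \<in> I \<and> j \<in> {1..k}} \<ge> 2 * card I"
  shows "\<exists>\<phi> \<psi> :: 'm \<Rightarrow> nat.
           (\<forall>i. \<phi> i \<in> {1..k} \<and> \<psi> i \<in> {1..k}) \<and>
           (let v = (\<lambda>x :: 'm + 'm. case x of Inl i \<Rightarrow> T (\<phi> i) (e i) | Inr i \<Rightarrow> T (\<psi> i) (e i))
            in inj v \<and> vec.independent (range v))"
proof -
  define B where "B i = (\<lambda>j. T j (e i)) ` {1..k}" for i
  have "\<Union>(B ` I) = {T j (e i) | i j. i \<in> I \<and> j \<in> {1..k}}" for I
    unfolding B_def by blast
  then have "vec.rado_condition UNIV (\<lambda>x. B (case_sum id id x))"
    using vec.rado_condition_Plus_self[of UNIV B] hyp by simp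
  moreover have "finite (B i)" for i
    unfolding B_def by simp
  ultimately have "\<exists>v. (\<forall>x\<in>UNIV. v x \<in> B (case_sum id id x)) \<and> inj v \<and> vec.independent (range v)"
    by (intro vec.rado_independent_transversal) simp_all
  then obtain v where v: "\<forall>x. v x \<in> B (case_sum id id x)" "inj v" "vec.independent (range v)"
    by blast
  have "\<exists>j\<in>{1..k}. v (Inl i) = T j (e i)" "\<exists>j\<in>{1..k}. v (Inr i) = T j (e i)" for i
    using v(1)[rule_format, of "Inl i"] v(1)[rule_format, of "Inr i"] by (auto simp: B_def)
  then obtain \<phi> \<psi> where "\<forall>i. \<phi> i \<in> {1..k} \<and> v (Inl i) = T (\<phi> i) (e i)"
    "\<forall>i. \<psi> i \<in> {1..k} \<and> v (Inr i) = T (\<psi> i) (e i)"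
    by metis
  moreover from this have "v = (\<lambda>x. case x of Inl i \<Rightarrow> T (\<phi> i) (e i) | Inr i \<Rightarrow> T (\<psi> i) (e i))"
    by (auto split: sum.splits)
  ultimately show ?thesis
    using v by (intro exI[of _ \<phi>] exI[of _ \<psi>]) (simp add: Let_def)
qed

end
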